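(* Let $m,n\ge0$. (a) For $0\le k,k'\le\min(m,n)$ and any integer $p$ with $\max(k,k')\le p\le m+n-\max(k,k')$, $$\sum_{\substack{i+j=p\\0\le i\le m,\ 0\le j\le n}} c_{m,n,k}(i,j)\,c_{m,n,k'}(m-i,n-j)=(-1)^k\,\delta_{k,k'}\,D(m,n,k).$$ (b) For pairs $(i,j),(i',j')$ with $0\le i,i'\le m$, $0\le j,j'\le n$ and $i+j=i'+j'=p$, $$\sum_{\substack{0\le k\le\min(m,n)\\ k\le p\le m+n-k}}(-1)^k\,C_{m,n,k}(m-i,n-j)\,C_{m,n,k}(i',j')\,D(m,n,k)=\delta_{i,i'}\delta_{j,j'}.$$
   Context: $D(m,n,k)=\binom{m+n-k+1}{k}\binom{m+n-2k}{m-k}$. Let $e,f,h$ be the standard basis of $\mathfrak{sl}(2,\mathbb{C})$. $V(n)$ is the irreducible representation of highest weight $n$ with fixed highest weight vector $\phi_n$; $\{f^i\phi_n\}_{0\le i\le n}$ is a basis, $f^{n+1}\phi_n=0$. $\mathfrak{sl}(2)$ acts on $V(m)\otimes V(n)$ by $X(v\otimes w)=Xv\otimes w+v\otimes Xw$. For $0\le k\le\min(m,n)$, $\phi_{m,n,k}=\sum_{l=0}^{k}(-1)^l\binom{m-l}{k-l}\binom{n-k+l}{l} f^l\phi_m\otimes f^{k-l}\phi_n$; it is a highest weight vector of weight $m+n-2k$ generating a copy of $V(m+n-2k)$ with basis $f^a\phi_{m,n,k}$, $0\le a\le m+n-2k$, and $V(m)\otimes V(n)$ is the direct sum of these copies.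 The coordinates $c_{m,n,k}(i,j)$ are defined by $f^{p-k}\phi_{m,n,k}=\sum_{i+j=p,\,0\le i\le m,\,0\le j\le n} c_{m,n,k}(i,j)\, f^i\phi_m\otimes f^j\phi_n$ for $k\le p\le m+n-k$. The Clebsch–Gordan coefficients $C_{m,n,k}(i,j)$ are defined by $f^i\phi_m\otimes f^j\phi_n=\sum_{k} C_{m,n,k}(i,j)\, f^{i+j-k}\phi_{m,n,k}$, sum over $0\le k\le\min(m,n)$ with $k\le i+j\le m+n-k$. *)

theory Defs
  imports Complex_Main
begin

definition D :: "nat \<Rightarrow> nat \<Rightarrow> nat \<Rightarrow> nat" where
  "D m n k = ((m + n - k + 1) choose k) * ((m + n - 2*k) choose (m - k))"

text \<open>Vectors of V(m) (x) V(n) are represented by their coordinates w.r.t. the basis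
  f^i phi_m (x) f^j phi_n, 0 <= i <= m, 0 <= j <= n, as functions nat => nat => complex
  (zero outside the box).  The action of f on the tensor product:
  f(f^i phi_m (x) f^j phi_n) = f^(i+1) phi_m (x) f^j phi_n + f^i phi_m (x) f^(j+1) phi_n,
  with f^(m+1) phi_m = 0 and f^(n+1) phi_n = 0.\<close>
definition fop :: "nat \<Rightarrow> nat \<Rightarrow> (nat \<Rightarrow> nat \<Rightarrow> complex) \<Rightarrow> (nat \<Rightarrow> nat \<Rightarrow> complex)" where
  "fop m n v = (\<lambda>i j. if i \<le> m \<and> j \<le> n then
       (if 1 \<le> i then v (i - 1) j else 0) + (if 1 \<le> j then v i (j - 1) else 0)
     else 0)"

definition phi :: "nat \<Rightarrow> nat \<Rightarrow> nat \<Rightarrow> (nat \<Rightarrow> nat \<Rightarrow> complex)" where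
  "phi m n k = (\<lambda>a b. if a + b = k \<and> a \<le> m \<and> b \<le> n then
       (-1) ^ a * of_nat ((m - a) choose (k - a)) * of_nat ((n - k + a) choose a)
     else 0)"

definition fphi :: "nat \<Rightarrow> nat \<Rightarrow> nat \<Rightarrow> nat \<Rightarrow> (nat \<Rightarrow> nat \<Rightarrow> complex)" where
  "fphi m n k s = (fop m n ^^ s) (phi m n k)"

text \<open>Coordinates c_{m,n,k}(i,j): coefficient of f^i phi_m (x) f^j phi_n in
  f^(i+j-k) phi_{m,n,k} (meaningful for k <= i+j <= m+n-k).\<close>
definition c :: "nat \<Rightarrow> nat \<Rightarrow> nat \<Rightarrow> nat \<Rightarrow> nat \<Rightarrow> complex" where
  "c m n k i j = fphi m n k (i + j - k) i j"

definition Kset :: "nat \<Rightarrow> nat \<Rightarrow> nat \<Rightarrow> nat set" where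
  "Kset m n p = {k. k \<le> min m n \<and> k \<le> p \<and> p \<le> m + n - k}"

definition CGvec :: "nat \<Rightarrow> nat \<Rightarrow> nat \<Rightarrow> nat \<Rightarrow> (nat \<Rightarrow> complex)" where
  "CGvec m n i j = (THE g. (\<forall>k. k \<notin> Kset m n (i + j) \<longrightarrow> g k = 0) \<and>
      (\<lambda>a b. if a = i \<and> b = j then 1 else 0) =
      (\<lambda>a b. \<Sum>k\<in>Kset m n (i + j). g k * fphi m n k (i + j - k) a b))"

definition CG :: "nat \<Rightarrow> nat \<Rightarrow> nat \<Rightarrow> nat \<Rightarrow> nat \<Rightarrow> complex" where
  "CG m n k i j = CGvec m n i j k"

end

theory Submission
  imports Defs "HOL-Computational_Algebra.Formal_Power_Series" "Jordan_Normal_Form.Determinant"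
begin

(*
  Write <v, w> = sum_{i,j} v(i,j) w(m-i, n-j).  The two shifts making up f are adjoint to each other
  under (i,j) -> (m-i, n-j), so f is self-adjoint, and the sum in (a) equals
  <phi_k, f^(m+n-k-k') phi_k'> = <f^(m+n-k-k') phi_k, phi_k'>.  As f^s phi_k = 0 for s > m+n-2k, this
  vanishes unless k = k'.  For k = k' the lowest weight vector f^(m+n-2k) phi_k is explicit: the
  f-equivariant map lift sends phi_{m,n,k} to (k+1) phi_{m+1,n+1,k+1}, which computes it by induction
  on k, and pairing it with phi_k is a Vandermonde convolution giving (-1)^k D(m,n,k).

  By (a), on each weight space the square matrices (c_k(i,j)) and ((-1)^k c_k(m-i,n-j) / D(m,n,k))
  are inverse to each other in one order, hence also in the other.  This identifies
  C_k(i,j) = (-1)^k c_k(m-i,n-j) / D(m,n,k) and gives (b).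
*)

definition homogeneous :: "nat \<Rightarrow> nat \<Rightarrow> nat \<Rightarrow> (nat \<Rightarrow> nat \<Rightarrow> complex) \<Rightarrow> bool" where
  "homogeneous d m n v \<longleftrightarrow> (\<forall>i j. v i j \<noteq> 0 \<longrightarrow> i + j = d \<and> i \<le> m \<and> j \<le> n)"

lemma homogeneous_fop:
  assumes "homogeneous d m n v"
  shows "homogeneous (Suc d) m n (fop m n v)"
  unfolding homogeneous_def
proof (intro allI impI)
  fix i j
  assume "fop m n v i j \<noteq> 0"
  then have "i \<le> m \<and> j \<le> n" and "(1 \<le> i \<and> v (i - 1) j \<noteq> 0) \<or> (1 \<le> j \<and> v i (j - 1) \<noteq> 0)"
    by (auto simp: fop_def split: if_splits)
  then show "i + j = Suc d \<and> i \<le> m \<and> j \<le> n"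
    using assms unfolding homogeneous_def by fastforce
qed

lemma homogeneous_fphi: "homogeneous (k + s) m n (fphi m n k s)"
proof (induction s)
  case 0
  show ?case by (auto simp: homogeneous_def fphi_def phi_def split: if_splits)
next
  case (Suc s)
  then show ?case by (simp add: fphi_def homogeneous_fop)
qed

lemma fop_zero: "fop m n (\<lambda>i j. 0) = (\<lambda>i j. 0)"
  by (intro ext) (simp add: fop_def)

lemma fop_scale: "fop m n (\<lambda>i j. a * v i j) = (\<lambda>i j. a * fop m n v i j)"
  by (intro ext) (simp add: fop_def algebra_simps)

lemma funpow_fop_zero: "(fop m n ^^ s) (\<lambda>i j. 0) = (\<lambda>i j. 0)"
  by (induction s) (simp_all add: fop_zero)

lemma funpow_fop_scale: "(fop m n ^^ s) (\<lambda>i j. a * v i j) = (\<lambda>i j. a * (fop m n ^^ s) v i j)"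
  by (induction s) (simp_all add: fop_scale)

definition lift :: "nat \<Rightarrow> nat \<Rightarrow> (nat \<Rightarrow> nat \<Rightarrow> complex) \<Rightarrow> (nat \<Rightarrow> nat \<Rightarrow> complex)" where
  "lift m n v = (\<lambda>i j. if i \<le> m \<and> j \<le> n then
     of_nat (m - i) * (if 1 \<le> j then v i (j - 1) else 0)
      - of_nat (n - j) * (if 1 \<le> i then v (i - 1) j else 0) else 0)"

lemma fop_lift: "fop (Suc m) (Suc n) (lift (Suc m) (Suc n) v) = lift (Suc m) (Suc n) (fop m n v)"
proof (intro ext)
  fix i j
  show "fop (Suc m) (Suc n) (lift (Suc m) (Suc n) v) i j = lift (Suc m) (Suc n) (fop m n v) i j"
  proof (cases "i \<le> Suc m \<and> j \<le> Suc n")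
    case True
    then obtain a b where "Suc m = i + a" "Suc n = j + b"
      by (metis le_add_diff_inverse)
    then show ?thesis
      by (cases i; cases j; cases a; cases b) (auto simp: fop_def lift_def algebra_simps)
  qed (auto simp: fop_def lift_def)
qed

lemma phi_altdef: "k \<le> n \<Longrightarrow> phi m n k = (\<lambda>a b. if a + b = k \<and> a \<le> m \<and> b \<le> n then
   (-1) ^ a * of_nat ((m - a) choose b) * of_nat ((n - b) choose a) else 0)"
  by (intro ext) (auto simp: phi_def)

lemma of_nat_binomial_absorption:
  "(if 1 \<le> k then of_nat x * of_nat ((x - 1) choose (k - 1)) else 0) = (of_nat (k * (x choose k)) :: 'a::semiring_1)"
proof (cases "1 \<le> k")
  case True
  then have "k * (x choose k) = x * ((x - 1) choose (k - 1))"
    by (simp add: times_binomial_minus1_eq)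
  with True show ?thesis
    by simp
qed (simp add: not_less_eq_eq)

lemma lift_phi:
  assumes "k \<le> m" "k \<le> n"
  shows "lift (Suc m) (Suc n) (phi m n k) = (\<lambda>a b. of_nat (Suc k) * phi (Suc m) (Suc n) (Suc k) a b)"
proof (intro ext)
  fix a b
  show "lift (Suc m) (Suc n) (phi m n k) a b = of_nat (Suc k) * phi (Suc m) (Suc n) (Suc k) a b"
  proof (cases "a + b = Suc k \<and> a \<le> Suc m \<and> b \<le> Suc n")
    case True
    define x y where "x = Suc m - a" and "y = Suc n - b"
    have "lift (Suc m) (Suc n) (phi m n k) a b =
        (-1) ^ a * of_nat (y choose a) * (if 1 \<le> b then of_nat x * of_nat ((x - 1) choose (b - 1)) else 0)
      + (-1) ^ a * of_nat (x choose b) * (if 1 \<le> a then of_nat y * of_nat ((y - 1) choose (a - 1)) else 0)"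
      using True assms by (cases a; cases b) (auto simp: lift_def phi_altdef x_def y_def)
    also have "\<dots> = (-1) ^ a * of_nat (x choose b) * of_nat (y choose a) * (of_nat a + of_nat b)"
      unfolding of_nat_binomial_absorption by (simp add: algebra_simps)
    also have "\<dots> = of_nat (Suc k) * phi (Suc m) (Suc n) (Suc k) a b"
      using True assms by (simp add: phi_altdef x_def y_def flip: of_nat_add)
    finally show ?thesis .
  qed (use assms in \<open>auto simp: lift_def phi_altdef\<close>)
qed

lemma funpow_fop_lift:
  "(fop (Suc m) (Suc n) ^^ s) (lift (Suc m) (Suc n) v) = lift (Suc m) (Suc n) ((fop m n ^^ s) v)"
  by (induction s) (simp_all add: fop_lift)

lemma fphi_Suc_Suc_Suc:
  assumes "k \<le> m" "k \<le> n"
  shows "fphi (Suc m) (Suc n) (Suc k) s = (\<lambda>i j. lift (Suc m) (Suc n) (fphi m n k s) i j / of_nat (Suc k))"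
proof -
  have phi_eq: "phi (Suc m) (Suc n) (Suc k) = (\<lambda>i j. (1 / of_nat (Suc k)) * lift (Suc m) (Suc n) (phi m n k) i j)"
    by (simp add: lift_phi[OF assms] del: of_nat_Suc)
  show ?thesis
    unfolding fphi_def phi_eq funpow_fop_scale funpow_fop_lift by simp
qed

lemma fphi_0: "fphi m n 0 s = (\<lambda>i j. if i + j = s \<and> i \<le> m \<and> j \<le> n then of_nat (s choose i) else 0)"
proof (induction s)
  case 0
  show ?case by (intro ext) (auto simp: fphi_def phi_def)
next
  case (Suc s)
  show ?case
  proof (intro ext)
    fix i j
    show "fphi m n 0 (Suc s) i j = (if i + j = Suc s \<and> i \<le> m \<and> j \<le> n then of_nat (Suc s choose i) else 0)"
      using Suc.IH by (cases i; cases j) (auto simp: fphi_def fop_def)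
  qed
qed

definition lowest_vec :: "nat \<Rightarrow> nat \<Rightarrow> nat \<Rightarrow> (nat \<Rightarrow> nat \<Rightarrow> complex)" where
  "lowest_vec m n k = (\<lambda>i j. if i + j = m + n - k \<and> i \<le> m \<and> j \<le> n
     then (-1) ^ (n - j) * of_nat ((m + n - 2 * k) choose (m - k)) else 0)"

lemma lift_lowest_vec:
  assumes "k \<le> m" "k \<le> n"
  shows "lift (Suc m) (Suc n) (lowest_vec m n k) = (\<lambda>i j. of_nat (Suc k) * lowest_vec (Suc m) (Suc n) (Suc k) i j)"
proof (intro ext)
  fix i j
  define B :: complex where "B = (-1) ^ (Suc n - j) * of_nat ((m + n - 2 * k) choose (m - k))"
  show "lift (Suc m) (Suc n) (lowest_vec m n k) i j = of_nat (Suc k) * lowest_vec (Suc m) (Suc n) (Suc k) i j"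
  proof (cases "i + j = Suc m + Suc n - Suc k \<and> i \<le> Suc m \<and> j \<le> Suc n")
    case True
    have left: "of_nat (Suc m - i) * (if 1 \<le> j then lowest_vec m n k i (j - 1) else 0) = of_nat (Suc m - i) * B"
    proof (cases "i \<le> m")
      case True
      with \<open>i + j = Suc m + Suc n - Suc k \<and> i \<le> Suc m \<and> j \<le> Suc n\<close> assms
      have "1 \<le> j" "i + (j - 1) = m + n - k" "j - 1 \<le> n" "n - (j - 1) = Suc n - j"
        by linarith+
      with True show ?thesis by (simp add: lowest_vec_def B_def)
    qed (use True in simp)
    have right: "of_nat (Suc n - j) * (if 1 \<le> i then lowest_vec m n k (i - 1) j else 0) = - (of_nat (Suc n - j) * B)"
    proof (cases "j \<le> n")
      case True
      with \<open>i + j = Suc m + Suc n - Suc k \<and> i \<le> Suc m \<and> j \<le> Suc n\<close> assms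
      have "1 \<le> i" "i - 1 + j = m + n - k" "i - 1 \<le> m" "Suc n - j = Suc (n - j)"
        by linarith+
      with True show ?thesis by (simp add: lowest_vec_def B_def)
    qed (use True in simp)
    have "Suc m - i + (Suc n - j) = Suc k"
      using True assms by linarith
    then have sum: "of_nat (Suc m - i) + of_nat (Suc n - j) = (of_nat (Suc k) :: complex)"
      by (metis of_nat_add)
    have "lift (Suc m) (Suc n) (lowest_vec m n k) i j =
        of_nat (Suc m - i) * (if 1 \<le> j then lowest_vec m n k i (j - 1) else 0)
      - of_nat (Suc n - j) * (if 1 \<le> i then lowest_vec m n k (i - 1) j else 0)"
      using True unfolding lift_def by simp
    also have "\<dots> = (of_nat (Suc m - i) + of_nat (Suc n - j)) * B"
      unfolding left right by (simp add: algebra_simps)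
    also have "\<dots> = of_nat (Suc k) * B"
      unfolding sum ..
    also have "\<dots> = of_nat (Suc k) * lowest_vec (Suc m) (Suc n) (Suc k) i j"
      using True assms by (simp add: lowest_vec_def B_def del: of_nat_Suc)
    finally show ?thesis .
  next
    case False
    with assms have "1 \<le> j \<Longrightarrow> lowest_vec m n k i (j - 1) = 0"
      "1 \<le> i \<Longrightarrow> lowest_vec m n k (i - 1) j = 0"
      "lowest_vec (Suc m) (Suc n) (Suc k) i j = 0"
      unfolding lowest_vec_def by auto
    then show ?thesis
      by (simp add: lift_def)
  qed
qed

lemma fphi_top:
  "k \<le> m \<Longrightarrow> k \<le> n \<Longrightarrow> fphi m n k (m + n - 2 * k) = lowest_vec m n k"
proof (induction k arbitrary: m n)
  case 0
  show ?case
  proof (intro ext)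
    fix i j
    show "fphi m n 0 (m + n - 2 * 0) i j = lowest_vec m n 0 i j"
      by (cases "i = m \<and> j = n") (auto simp: fphi_0 lowest_vec_def)
  qed
next
  case (Suc k)
  then obtain m' n' where mn: "m = Suc m'" "n = Suc n'" "k \<le> m'" "k \<le> n'"
    by (cases m; cases n) auto
  then have "m + n - 2 * Suc k = m' + n' - 2 * k" by simp
  then show ?case
    using Suc.IH[OF mn(3,4)] by (simp add: mn fphi_Suc_Suc_Suc lift_lowest_vec del: of_nat_Suc)
qed

lemma fop_lowest_vec:
  assumes "k \<le> m" "k \<le> n"
  shows "fop m n (lowest_vec m n k) = (\<lambda>i j. 0)"
proof (intro ext)
  fix i j
  show "fop m n (lowest_vec m n k) i j = 0"
  proof (cases "i + j = Suc (m + n - k) \<and> i \<le> m \<and> j \<le> n")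
    case True
    then have "1 \<le> i" "1 \<le> j" "j \<le> n"
      using assms by linarith+
    then have "(-1::complex) ^ (n - (j - 1)) = - ((-1) ^ (n - j))"
      by (simp add: Suc_diff_le)
    then show ?thesis
      using True \<open>1 \<le> i\<close> \<open>1 \<le> j\<close> by (auto simp: fop_def lowest_vec_def)
  qed (use assms in \<open>auto simp: fop_def lowest_vec_def\<close>)
qed

lemma fphi_beyond_top:
  assumes "k \<le> m" "k \<le> n" "m + n - 2 * k < s"
  shows "fphi m n k s = (\<lambda>i j. 0)"
proof -
  obtain t where "s = t + Suc (m + n - 2 * k)"
    using assms(3) less_iff_Suc_add by (auto simp: add.commute)
  then have "fphi m n k s = (fop m n ^^ t) (fop m n (fphi m n k (m + n - 2 * k)))"
    by (simp add: fphi_def funpow_add funpow_swap1)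
  then show ?thesis
    by (simp add: fphi_top[OF assms(1,2)] fop_lowest_vec[OF assms(1,2)] funpow_fop_zero)
qed

definition pairing :: "nat \<Rightarrow> nat \<Rightarrow> (nat \<Rightarrow> nat \<Rightarrow> complex) \<Rightarrow> (nat \<Rightarrow> nat \<Rightarrow> complex) \<Rightarrow> complex" where
  "pairing m n v w = (\<Sum>i\<le>m. \<Sum>j\<le>n. v i j * w (m - i) (n - j))"

lemma sum_shift_reflect:
  fixes a b :: "nat \<Rightarrow> 'a::comm_semiring_0"
  shows "(\<Sum>i\<le>m. (if 1 \<le> i then a (i - 1) else 0) * b (m - i))
       = (\<Sum>i\<le>m. a i * (if 1 \<le> m - i then b (m - i - 1) else 0))"
proof (cases m)
  case (Suc m')
  have "(\<Sum>i\<le>m. (if 1 \<le> i then a (i - 1) else 0) * b (m - i)) = (\<Sum>i\<le>m'. a i * b (m' - i))"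
    by (simp add: Suc sum.atMost_Suc_shift del: sum.atMost_Suc)
  also have "\<dots> = (\<Sum>i\<le>m. a i * (if 1 \<le> m - i then b (m - i - 1) else 0))"
    by (simp add: Suc sum.atMost_Suc Suc_diff_le)
  finally show ?thesis .
qed simp

lemma pairing_fop: "pairing m n (fop m n v) w = pairing m n v (fop m n w)"
proof -
  have shift_i: "(\<Sum>i\<le>m. \<Sum>j\<le>n. (if 1 \<le> i then v (i - 1) j else 0) * w (m - i) (n - j))
      = (\<Sum>i\<le>m. \<Sum>j\<le>n. v i j * (if 1 \<le> m - i then w (m - i - 1) (n - j) else 0))"
  proof -
    have "(\<Sum>i\<le>m. (if 1 \<le> i then v (i - 1) j else 0) * w (m - i) (n - j))
        = (\<Sum>i\<le>m. v i j * (if 1 \<le> m - i then w (m - i - 1) (n - j) else 0))" for j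
      using sum_shift_reflect[where a = "\<lambda>i. v i j" and b = "\<lambda>i. w i (n - j)"] by simp
    then show ?thesis
      by (subst (1 2) sum.swap) simp
  qed
  have shift_j: "(\<Sum>i\<le>m. \<Sum>j\<le>n. (if 1 \<le> j then v i (j - 1) else 0) * w (m - i) (n - j))
      = (\<Sum>i\<le>m. \<Sum>j\<le>n. v i j * (if 1 \<le> n - j then w (m - i) (n - j - 1) else 0))"
  proof -
    have "(\<Sum>j\<le>n. (if 1 \<le> j then v i (j - 1) else 0) * w (m - i) (n - j))
        = (\<Sum>j\<le>n. v i j * (if 1 \<le> n - j then w (m - i) (n - j - 1) else 0))" for i
      using sum_shift_reflect[where a = "v i" and b = "w (m - i)"] by simp
    then show ?thesis
      by simp
  qed
  have "pairing m n (fop m n v) w = (\<Sum>i\<le>m. \<Sum>j\<le>n.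
      ((if 1 \<le> i then v (i - 1) j else 0) + (if 1 \<le> j then v i (j - 1) else 0)) * w (m - i) (n - j))"
    unfolding pairing_def fop_def by (intro sum.cong refl) auto
  also have "\<dots> = (\<Sum>i\<le>m. \<Sum>j\<le>n. v i j *
      ((if 1 \<le> m - i then w (m - i - 1) (n - j) else 0) + (if 1 \<le> n - j then w (m - i) (n - j - 1) else 0)))"
    unfolding distrib_left distrib_right sum.distrib shift_i shift_j ..
  also have "\<dots> = pairing m n v (fop m n w)"
    unfolding pairing_def fop_def by (intro sum.cong refl) auto
  finally show ?thesis .
qed

lemma pairing_funpow_fop: "pairing m n ((fop m n ^^ s) v) w = pairing m n v ((fop m n ^^ s) w)"
proof (induction s arbitrary: w)
  case (Suc s)
  have "pairing m n ((fop m n ^^ Suc s) v) w = pairing m n ((fop m n ^^ s) v) (fop m n w)"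
    by (simp add: pairing_fop)
  also have "\<dots> = pairing m n v ((fop m n ^^ s) (fop m n w))"
    by (rule Suc.IH)
  finally show ?case
    by (simp add: funpow_swap1)
qed simp

lemma of_nat_choose_eq_gbinomial_negated:
  "(of_nat ((a + j) choose j) :: 'a::field_char_0) = (-1) ^ j * ((- of_nat a - 1) gchoose j)"
proof -
  have "((- of_nat a - 1 :: 'a) gchoose j) = (-1) ^ j * of_nat ((a + j) choose j)"
    by (simp add: gbinomial_negated_upper[of "- of_nat a - 1"] binomial_gbinomial add.commute)
  then show ?thesis
    by (simp flip: power_mult_distrib)
qed

lemma Vandermonde_choose_lower:
  "(\<Sum>i\<le>k. ((r + (k - i)) choose (k - i)) * ((q + i) choose i)) = (q + r + k + 1) choose k"
proof -
  define X Y :: complex where "X = - of_nat r - 1" and "Y = - of_nat q - 1"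
  have "(\<Sum>i\<le>k. of_nat ((r + (k - i)) choose (k - i)) * of_nat ((q + i) choose i) :: complex)
      = (\<Sum>i\<in>{0..k}. (-1) ^ k * ((Y gchoose i) * (X gchoose (k - i))))"
  proof (intro sum.cong)
    fix i assume "i \<in> {0..k}"
    then have "(-1::complex) ^ (k - i) * (-1) ^ i = (-1) ^ k"
      by (simp flip: power_add)
    then show "of_nat ((r + (k - i)) choose (k - i)) * of_nat ((q + i) choose i)
        = (-1) ^ k * ((Y gchoose i) * (X gchoose (k - i)))"
      unfolding X_def Y_def of_nat_choose_eq_gbinomial_negated by (simp add: algebra_simps)
  qed auto
  also have "\<dots> = (-1) ^ k * ((Y + X) gchoose k)"
    by (simp add: gbinomial_Vandermonde flip: sum_distrib_left)
  also have "Y + X = - of_nat (q + r + 1) - 1"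
    by (simp add: X_def Y_def)
  also have "(-1) ^ k * ((- of_nat (q + r + 1) - 1) gchoose k) = (of_nat ((q + r + 1 + k) choose k) :: complex)"
    by (rule of_nat_choose_eq_gbinomial_negated[symmetric])
  finally show ?thesis
    by (simp add: add_ac flip: of_nat_mult of_nat_sum)
qed

lemma pairing_phi_lowest_vec:
  assumes "k \<le> m" "k \<le> n"
  shows "pairing m n (phi m n k) (lowest_vec m n k) = (-1) ^ k * of_nat (D m n k)"
proof -
  define B :: complex where "B = of_nat ((m + n - 2 * k) choose (m - k))"
  define T where "T i = (-1) ^ k * B * of_nat ((m - i) choose (k - i)) * of_nat ((n - k + i) choose i)" for i
  have row: "(\<Sum>j\<le>n. phi m n k i j * lowest_vec m n k (m - i) (n - j)) = (if i \<le> k then T i else 0)"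
    if "i \<le> m" for i
  proof -
    have "phi m n k i j * lowest_vec m n k (m - i) (n - j) = (if j = k - i \<and> i \<le> k then T i else 0)"
      if "j \<le> n" for j
    proof (cases "i + j = k")
      case True
      then have "(-1::complex) ^ i * (-1) ^ j = (-1) ^ k"
        by (simp flip: power_add)
      with True \<open>i \<le> m\<close> \<open>j \<le> n\<close> assms show ?thesis
        by (auto simp: phi_def lowest_vec_def T_def B_def algebra_simps)
    qed (use \<open>i \<le> m\<close> \<open>j \<le> n\<close> assms in \<open>auto simp: phi_def lowest_vec_def\<close>)
    then have "(\<Sum>j\<le>n. phi m n k i j * lowest_vec m n k (m - i) (n - j))
        = (\<Sum>j\<le>n. if j = k - i \<and> i \<le> k then T i else 0)"
      by (intro sum.cong) auto
    also have "\<dots> = (if i \<le> k then T i else 0)"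
      using assms by (auto simp: sum.delta)
    finally show ?thesis .
  qed
  have "pairing m n (phi m n k) (lowest_vec m n k) = (\<Sum>i\<le>m. if i \<le> k then T i else 0)"
    unfolding pairing_def by (intro sum.cong) (simp_all add: row)
  also have "\<dots> = (\<Sum>i\<le>k. T i)"
    using assms by (intro sum.mono_neutral_cong_right) auto
  also have "\<dots> = (-1) ^ k * B * of_nat ((m + n - k + 1) choose k)"
  proof -
    have "(\<Sum>i\<le>k. ((m - i) choose (k - i)) * ((n - k + i) choose i)) = (m + n - k + 1) choose k"
      using Vandermonde_choose_lower[of "m - k" k "n - k"] assms
      by (simp add: algebra_simps)
    then show ?thesis
      unfolding T_def by (simp add: mult.assoc flip: sum_distrib_left of_nat_mult of_nat_sum)
  qed
  also have "\<dots> = (-1) ^ k * of_nat (D m n k)"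
    by (simp add: D_def B_def)
  finally show ?thesis .
qed

abbreviation weight_slice :: "nat \<Rightarrow> nat \<Rightarrow> nat \<Rightarrow> (nat \<times> nat) set" where
  "weight_slice m n p \<equiv> {(i, j). i + j = p \<and> i \<le> m \<and> j \<le> n}"

lemma sum_c_eq_pairing:
  assumes "k \<le> p" "k' \<le> m + n - p" "p \<le> m + n"
  shows "(\<Sum>(i, j)\<in>weight_slice m n p. c m n k i j * c m n k' (m - i) (n - j))
     = pairing m n (fphi m n k (p - k)) (fphi m n k' (m + n - p - k'))"
proof -
  let ?V = "fphi m n k (p - k)" and ?W = "fphi m n k' (m + n - p - k')"
  have support: "i + j = p" if "?V i j \<noteq> 0" for i j
    using homogeneous_fphi[of k "p - k" m n] that assms unfolding homogeneous_def by auto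
  have "pairing m n ?V ?W = (\<Sum>(i, j)\<in>weight_slice m n p. ?V i j * ?W (m - i) (n - j))"
    unfolding pairing_def sum.cartesian_product
    by (intro sum.mono_neutral_right) (auto dest: support)
  also have "\<dots> = (\<Sum>(i, j)\<in>weight_slice m n p. c m n k i j * c m n k' (m - i) (n - j))"
    by (intro sum.cong) (auto simp: c_def add_ac)
  finally show ?thesis ..
qed

lemma pairing_fphi_fphi:
  "pairing m n (fphi m n k a) (fphi m n k' b) = pairing m n (phi m n k) (fphi m n k' (a + b))"
  "pairing m n (fphi m n k a) (fphi m n k' b) = pairing m n (fphi m n k (a + b)) (phi m n k')"
  unfolding fphi_def pairing_funpow_fop by (simp_all add: funpow_add add.commute flip: pairing_funpow_fop)

lemma c_orthogonality:
  assumes "k \<le> min m n" "k' \<le> min m n" "max k k' \<le> p" "p \<le> m + n - max k k'"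
  shows "(\<Sum>(i, j)\<in>weight_slice m n p. c m n k i j * c m n k' (m - i) (n - j))
     = (-1) ^ k * (if k = k' then 1 else 0) * of_nat (D m n k)"
proof -
  define s where "s = p - k + (m + n - p - k')"
  have bounds: "k \<le> p" "k' \<le> m + n - p" "p \<le> m + n"
    using assms by auto
  have sum_eq: "(\<Sum>(i, j)\<in>weight_slice m n p. c m n k i j * c m n k' (m - i) (n - j))
      = pairing m n (phi m n k) (fphi m n k' s)"
    "(\<Sum>(i, j)\<in>weight_slice m n p. c m n k i j * c m n k' (m - i) (n - j))
      = pairing m n (fphi m n k s) (phi m n k')"
    unfolding sum_c_eq_pairing[OF bounds] s_def by (rule pairing_fphi_fphi)+
  consider "k < k'" | "k' < k" | "k = k'"
    by linarith
  then show ?thesis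
  proof cases
    case 1
    then have "fphi m n k' s = (\<lambda>i j. 0)"
      using assms by (intro fphi_beyond_top) (auto simp: s_def)
    with 1 show ?thesis
      by (simp add: sum_eq(1) pairing_def)
  next
    case 2
    then have "fphi m n k s = (\<lambda>i j. 0)"
      using assms by (intro fphi_beyond_top) (auto simp: s_def)
    with 2 show ?thesis
      by (simp add: sum_eq(2) pairing_def)
  next
    case 3
    then have "s = m + n - 2 * k"
      using bounds by (simp add: s_def)
    with 3 assms have "fphi m n k' s = lowest_vec m n k"
      by (simp add: fphi_top)
    then show ?thesis
      unfolding sum_eq(1) using 3 assms by (simp add: pairing_phi_lowest_vec)
  qed
qed

lemma left_inverse_imp_right_inverse:
  fixes M :: "'r \<Rightarrow> 'k \<Rightarrow> 'a::field" and N :: "'k \<Rightarrow> 'r \<Rightarrow> 'a"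
  assumes "finite R" "finite K" "card R = card K"
    and left: "\<And>k k'. k \<in> K \<Longrightarrow> k' \<in> K \<Longrightarrow> (\<Sum>r\<in>R. N k r * M r k') = (if k = k' then 1 else 0)"
    and "r \<in> R" "r' \<in> R"
  shows "(\<Sum>k\<in>K. M r k * N k r') = (if r = r' then 1 else 0)"
proof -
  define d where "d = card K"
  obtain f where f: "bij_betw f {0..<d} R"
    using ex_bij_betw_nat_finite[OF assms(1)] assms(3) d_def by auto
  obtain g where g: "bij_betw g {0..<d} K"
    using ex_bij_betw_nat_finite[OF assms(2)] d_def by auto
  define A where "A = mat d d (\<lambda>(a, b). N (g a) (f b))"
  define B where "B = mat d d (\<lambda>(a, b). M (f a) (g b))"
  have "A * B = 1\<^sub>m d"
  proof (rule eq_matI)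
    fix a b
    assume "a < dim_row (1\<^sub>m d)" "b < dim_col (1\<^sub>m d)"
    then have ab: "a < d" "b < d" by auto
    have "(A * B) $$ (a, b) = (\<Sum>c\<in>{0..<d}. N (g a) (f c) * M (f c) (g b))"
      using ab by (simp add: A_def B_def scalar_prod_def)
    also have "\<dots> = (\<Sum>r\<in>R. N (g a) r * M r (g b))"
      by (rule sum.reindex_bij_betw[OF f])
    also have "\<dots> = (if g a = g b then 1 else 0)"
      using left g ab by (auto simp: bij_betw_def)
    also have "\<dots> = (if a = b then 1 else 0)"
      using g ab by (auto simp: bij_betw_def inj_on_def)
    finally show "(A * B) $$ (a, b) = 1\<^sub>m d $$ (a, b)"
      using ab by simp
  qed (auto simp: A_def B_def)
  moreover have "A \<in> carrier_mat d d" "B \<in> carrier_mat d d"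
    by (auto simp: A_def B_def)
  ultimately have BA: "B * A = 1\<^sub>m d"
    using mat_mult_left_right_inverse by blast
  obtain a where a: "a < d" "f a = r"
    using f \<open>r \<in> R\<close> by (auto simp: bij_betw_def)
  obtain b where b: "b < d" "f b = r'"
    using f \<open>r' \<in> R\<close> by (auto simp: bij_betw_def)
  have "(\<Sum>k\<in>K. M r k * N k r') = (\<Sum>c\<in>{0..<d}. M (f a) (g c) * N (g c) (f b))"
    unfolding a b by (rule sum.reindex_bij_betw[OF g, symmetric])
  also have "\<dots> = (B * A) $$ (a, b)"
    using a b by (simp add: A_def B_def scalar_prod_def)
  also have "\<dots> = (if a = b then 1 else 0)"
    unfolding BA using a b by simp
  also have "\<dots> = (if r = r' then 1 else 0)"
    using a b f by (auto simp: bij_betw_def inj_on_def)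
  finally show ?thesis .
qed

lemma unique_expansion_coefficients:
  fixes M :: "'r \<Rightarrow> 'k \<Rightarrow> 'a::comm_ring_1" and N :: "'k \<Rightarrow> 'r \<Rightarrow> 'a"
  assumes "finite R" "finite K"
    and left: "\<And>k k'. k \<in> K \<Longrightarrow> k' \<in> K \<Longrightarrow> (\<Sum>r\<in>R. N k r * M r k') = (if k = k' then 1 else 0)"
    and right: "\<And>r r'. r \<in> R \<Longrightarrow> r' \<in> R \<Longrightarrow> (\<Sum>k\<in>K. M r k * N k r') = (if r = r' then 1 else 0)"
    and "r\<^sub>0 \<in> R"
  shows "(\<forall>r\<in>R. (\<Sum>k\<in>K. g k * M r k) = (if r = r\<^sub>0 then 1 else 0)) \<longleftrightarrow> (\<forall>k\<in>K. g k = N k r\<^sub>0)"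
proof
  assume expansion: "\<forall>r\<in>R. (\<Sum>k\<in>K. g k * M r k) = (if r = r\<^sub>0 then 1 else 0)"
  show "\<forall>k\<in>K. g k = N k r\<^sub>0"
  proof
    fix k
    assume "k \<in> K"
    have "N k r\<^sub>0 = (\<Sum>r\<in>R. N k r * (if r = r\<^sub>0 then 1 else 0))"
      using assms(1,5) by (simp add: if_distrib sum.delta cong: if_cong)
    also have "\<dots> = (\<Sum>r\<in>R. N k r * (\<Sum>k'\<in>K. g k' * M r k'))"
      using expansion by simp
    also have "\<dots> = (\<Sum>k'\<in>K. g k' * (\<Sum>r\<in>R. N k r * M r k'))"
      by (simp add: sum_distrib_left mult_ac sum.swap[of _ K])
    also have "\<dots> = g k"
      using \<open>k \<in> K\<close> assms(2) by (simp add: left if_distrib sum.delta cong: if_cong)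
    finally show "g k = N k r\<^sub>0" ..
  qed
next
  assume "\<forall>k\<in>K. g k = N k r\<^sub>0"
  then show "\<forall>r\<in>R. (\<Sum>k\<in>K. g k * M r k) = (if r = r\<^sub>0 then 1 else 0)"
    using right \<open>r\<^sub>0 \<in> R\<close> by (simp add: mult.commute)
qed

lemma card_weight_slice:
  assumes "p \<le> m + n"
  shows "card (weight_slice m n p) = card (Kset m n p)"
proof -
  have "weight_slice m n p = (\<lambda>i. (i, p - i)) ` {p - n .. min m p}"
  proof (intro equalityI subsetI)
    fix x
    assume "x \<in> weight_slice m n p"
    then obtain i j where "x = (i, j)" "i + j = p" "i \<le> m" "j \<le> n"
      by blast
    then show "x \<in> (\<lambda>i. (i, p - i)) ` {p - n .. min m p}"
      by (intro image_eqI[of _ _ i]) auto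
  next
    fix x
    assume "x \<in> (\<lambda>i. (i, p - i)) ` {p - n .. min m p}"
    then obtain i where "x = (i, p - i)" "p - n \<le> i" "i \<le> m" "i \<le> p"
      by auto
    then show "x \<in> weight_slice m n p"
      by simp
  qed
  moreover have "inj_on (\<lambda>i. (i, p - i)) A" for A :: "nat set"
    by (auto simp: inj_on_def)
  moreover have "Kset m n p = {..min (min m n) (min p (m + n - p))}"
    using assms by (auto simp: Kset_def)
  moreover have "Suc (min m p) - (p - n) = Suc (min (min m n) (min p (m + n - p)))"
    using assms unfolding min_def by (simp split: if_split; linarith)
  ultimately show ?thesis
    by (simp add: card_image)
qed

lemma finite_weight_slice: "finite (weight_slice m n p)"
  by (rule finite_subset[of _ "{..m} \<times> {..n}"]) auto

lemma finite_Kset: "finite (Kset m n p)"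
  by (rule finite_subset[of _ "{..m}"]) (auto simp: Kset_def)

lemma Kset_complement: "p \<le> m + n \<Longrightarrow> Kset m n (m + n - p) = Kset m n p"
  unfolding Kset_def by auto

lemma D_ne_zero: "k \<le> min m n \<Longrightarrow> D m n k \<noteq> 0"
  unfolding D_def by auto

lemma c_dual_orthogonality:
  assumes "p \<le> m + n" "k \<in> Kset m n p" "k' \<in> Kset m n p"
  shows "(\<Sum>r\<in>weight_slice m n p.
      ((-1) ^ k * c m n k (m - fst r) (n - snd r) / of_nat (D m n k)) * c m n k' (fst r) (snd r))
    = (if k = k' then 1 else 0)"
proof -
  have bounds: "k' \<le> min m n" "k \<le> min m n" "max k' k \<le> p" "p \<le> m + n - max k' k"
    using assms by (auto simp: Kset_def)
  have "(\<Sum>r\<in>weight_slice m n p.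
      ((-1) ^ k * c m n k (m - fst r) (n - snd r) / of_nat (D m n k)) * c m n k' (fst r) (snd r))
    = (-1) ^ k / of_nat (D m n k) *
      (\<Sum>(i, j)\<in>weight_slice m n p. c m n k' i j * c m n k (m - i) (n - j))"
    by (simp add: sum_distrib_left split_def algebra_simps)
  also have "\<dots> = (-1) ^ k / of_nat (D m n k) * ((-1) ^ k' * (if k' = k then 1 else 0) * of_nat (D m n k'))"
    by (simp add: c_orthogonality[OF bounds])
  also have "\<dots> = (if k = k' then 1 else 0)"
    using D_ne_zero[OF bounds(2)] by (cases "k = k'") (simp_all flip: power_mult_distrib)
  finally show ?thesis .
qed

lemma c_completeness:
  assumes "p \<le> m + n"
    and "(i, j) \<in> weight_slice m n p" "(i', j') \<in> weight_slice m n p"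
  shows "(\<Sum>k\<in>Kset m n p. c m n k i j * ((-1) ^ k * c m n k (m - i') (n - j') / of_nat (D m n k)))
    = (if (i, j) = (i', j') then 1 else 0)"
  using left_inverse_imp_right_inverse[OF finite_weight_slice finite_Kset card_weight_slice[OF assms(1)]
      c_dual_orthogonality[OF assms(1)] assms(2,3)]
  by simp

lemma CGvec_eq:
  assumes "i \<le> m" "j \<le> n"
  shows "CGvec m n i j = (\<lambda>k. if k \<in> Kset m n (i + j)
      then (-1) ^ k * c m n k (m - i) (n - j) / of_nat (D m n k) else 0)"
proof -
  define p where "p = i + j"
  define R where "R = weight_slice m n p"
  define K where "K = Kset m n p"
  define M where "M r k = c m n k (fst r) (snd r)" for r k
  define N where "N k r = (-1) ^ k * c m n k (m - fst r) (n - snd r) / of_nat (D m n k)" for k r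
  have "(i, j) \<in> R"
    using assms by (simp add: R_def p_def)
  have p: "p \<le> m + n"
    using assms by (simp add: p_def)
  have left: "(\<Sum>r\<in>R. N k r * M r k') = (if k = k' then 1 else 0)" if "k \<in> K" "k' \<in> K" for k k'
    using c_dual_orthogonality[OF p] that unfolding R_def K_def M_def N_def by blast
  have right: "(\<Sum>k\<in>K. M r k * N k r') = (if r = r' then 1 else 0)" if "r \<in> R" "r' \<in> R" for r r'
    using c_completeness[OF p, of "fst r" "snd r" "fst r'" "snd r'"] that
    unfolding R_def K_def M_def N_def by (simp add: prod_eq_iff split_beta)
  have unique: "(\<forall>r\<in>R. (\<Sum>k\<in>K. g k * M r k) = (if r = (i, j) then 1 else 0))
      \<longleftrightarrow> (\<forall>k\<in>K. g k = N k (i, j))" for g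
    using finite_weight_slice finite_Kset left right \<open>(i, j) \<in> R\<close> unfolding R_def K_def
    by (rule unique_expansion_coefficients)
  have "fphi m n k (p - k) a b = (if (a, b) \<in> R then M (a, b) k else 0)" if "k \<in> K" for k a b
    using homogeneous_fphi[of k "p - k" m n] that
    by (auto simp: homogeneous_def R_def K_def Kset_def M_def c_def)
  then have entry: "(\<Sum>k\<in>K. g k * fphi m n k (p - k) a b) = (if (a, b) \<in> R then \<Sum>k\<in>K. g k * M (a, b) k else 0)"
    for g a b
    by (cases "(a, b) \<in> R") simp_all
  have expansion: "(\<lambda>a b. if a = i \<and> b = j then 1 else 0) = (\<lambda>a b. \<Sum>k\<in>K. g k * fphi m n k (p - k) a b)
      \<longleftrightarrow> (\<forall>r\<in>R. (\<Sum>k\<in>K. g k * M r k) = (if r = (i, j) then 1 else 0))" for g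
    using \<open>(i, j) \<in> R\<close> by (auto simp: fun_eq_iff entry)
  have "CGvec m n i j = (THE g. g = (\<lambda>k. if k \<in> K then N k (i, j) else 0))"
    unfolding CGvec_def p_def[symmetric] K_def[symmetric] expansion unique
    by (metis (no_types, opaque_lifting))
  also have "\<dots> = (\<lambda>k. if k \<in> K then N k (i, j) else 0)"
    by simp
  finally show ?thesis
    unfolding K_def N_def p_def fst_conv snd_conv .
qed

lemma CG_orthogonality:
  assumes "i \<le> m" "i' \<le> m" "j \<le> n" "j' \<le> n" "i + j = p" "i' + j' = p"
  shows "(\<Sum>k\<in>{k. k \<le> min m n \<and> k \<le> p \<and> p \<le> m + n - k}.
      (-1) ^ k * CG m n k (m - i) (n - j) * CG m n k i' j' * of_nat (D m n k))
    = (if i = i' \<and> j = j' then 1 else 0)"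
proof -
  have p: "p \<le> m + n"
    using assms by simp
  have "(-1) ^ k * CG m n k (m - i) (n - j) * CG m n k i' j' * of_nat (D m n k)
      = c m n k i j * ((-1) ^ k * c m n k (m - i') (n - j') / of_nat (D m n k))"
    if "k \<in> Kset m n p" for k
  proof -
    have "m - i + (n - j) = m + n - p"
      using assms by simp
    then have "CG m n k (m - i) (n - j) = (-1) ^ k * c m n k i j / of_nat (D m n k)"
      using that assms by (simp add: CG_def CGvec_eq Kset_complement[OF p])
    moreover have "CG m n k i' j' = (-1) ^ k * c m n k (m - i') (n - j') / of_nat (D m n k)"
      using that assms by (simp add: CG_def CGvec_eq)
    moreover have "of_nat (D m n k) \<noteq> (0::complex)"
      using that D_ne_zero by (simp add: Kset_def)
    ultimately show ?thesis
      by (simp flip: power_mult_distrib)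
  qed
  then have "(\<Sum>k\<in>{k. k \<le> min m n \<and> k \<le> p \<and> p \<le> m + n - k}.
      (-1) ^ k * CG m n k (m - i) (n - j) * CG m n k i' j' * of_nat (D m n k))
    = (\<Sum>k\<in>Kset m n p. c m n k i j * ((-1) ^ k * c m n k (m - i') (n - j') / of_nat (D m n k)))"
    by (intro sum.cong) (simp_all add: Kset_def)
  also have "\<dots> = (if i = i' \<and> j = j' then 1 else 0)"
    using c_completeness[OF p, of i j i' j'] assms by simp
  finally show ?thesis .
qed

theorem corollary4p11:
  fixes m n :: nat
  shows "(\<forall>k k' p. k \<le> min m n \<longrightarrow> k' \<le> min m n \<longrightarrow>
            max k k' \<le> p \<longrightarrow> p \<le> m + n - max k k' \<longrightarrow>
            (\<Sum>(i, j)\<in>{(i, j). i + j = p \<and> i \<le> m \<and> j \<le> n}.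
                c m n k i j * c m n k' (m - i) (n - j))
            = (-1) ^ k * (if k = k' then 1 else 0) * of_nat (D m n k))
       \<and> (\<forall>i j i' j' p. i \<le> m \<longrightarrow> i' \<le> m \<longrightarrow> j \<le> n \<longrightarrow> j' \<le> n \<longrightarrow>
            i + j = p \<longrightarrow> i' + j' = p \<longrightarrow>
            (\<Sum>k\<in>{k. k \<le> min m n \<and> k \<le> p \<and> p \<le> m + n - k}.
                (-1) ^ k * CG m n k (m - i) (n - j) * CG m n k i' j' * of_nat (D m n k))
            = (if i = i' \<and> j = j' then 1 else 0))"
  using c_orthogonality CG_orthogonality by blast

end
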